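(* Let $\alpha\in(0,1)$, $k\ge1$ an integer, and $c=-\frac12\log\alpha$. Suppose $z_i\sim\mathcal N(\mu_i,2\mu_i)$ for $i=1,2,\dots$ with $0\le\mu_i\le\frac{-k\log\alpha}{2(k+i)}$ (where $\mathcal N(0,0)$ is the point mass at $0$). Then $$\mathbb E\,\#\{i\ge1:|z_i|>c\}\ \le\ C_3(\alpha)\,k,\qquad C_3(\alpha)=\int_0^\infty\Big[\Phi\Big(\tfrac{-(2+t)\sqrt c}{\sqrt{2+2t}}\Big)+1-\Phi\Big(\tfrac{t\sqrt c}{\sqrt{2+2t}}\Big)\Big]dt<\infty,$$ where $\Phi$ is the standard normal distribution function. *)

theory Defs
  imports "HOL-Probability.Probability"
begin

definition Phi :: "real \<Rightarrow> real" where
  "Phi x = measure (density lborel std_normal_density) {..x}"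

definition normal_law_2m :: "real \<Rightarrow> real measure" where
  "normal_law_2m m = (if m = 0 then return borel 0
                      else density lborel (normal_density m (sqrt (2 * m))))"

definition C3 :: "real \<Rightarrow> ennreal" where
  "C3 \<alpha> = (let c = - (1/2) * ln \<alpha> in
     \<integral>\<^sup>+ t. ennreal (Phi (- (2 + t) * sqrt c / sqrt (2 + 2 * t))
                      + 1 - Phi (t * sqrt c / sqrt (2 + 2 * t)))
            * indicator {0..} t \<partial>lborel)"

end

theory Submission
  imports Defs
begin

text \<open>For \<open>t \<in> [i/k, (i+1)/k)\<close> the hypothesis on \<open>\<mu>\<^sub>i\<close> gives \<open>(1 + t) \<mu>\<^sub>i \<le> c\<close>, and under this
  constraint the standardized thresholds \<open>(\<plusminus>c - \<mu>\<^sub>i) / sqrt (2 \<mu>\<^sub>i)\<close> are dominated by those in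
  the integrand of \<open>C\<^sub>3\<close>; hence \<open>P(|z\<^sub>i| > c)\<close> is at most the integrand at every point of an
  interval of length \<open>1/k\<close>, and summing over \<open>i\<close> gives \<open>k C\<^sub>3\<close>. The integrand is at most 2, and
  by Markov's inequality for the fourth moment of the standard normal it is \<open>O(t\<^sup>-\<^sup>2)\<close>, so \<open>C\<^sub>3\<close>
  is finite.\<close>

abbreviation std_normal :: "real measure" where
  "std_normal \<equiv> density lborel std_normal_density"

lemma prob_space_std_normal: "prob_space std_normal"
  by (rule prob_space_normal_density) simp

lemma Phi_mono: "x \<le> y \<Longrightarrow> Phi x \<le> Phi y"
proof -
  assume "x \<le> y"
  interpret prob_space std_normal by (rule prob_space_std_normal)
  show ?thesis unfolding Phi_def using \<open>x \<le> y\<close> by (intro finite_measure_mono) auto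
qed

lemma Phi_nonneg: "0 \<le> Phi x" and Phi_le_1: "Phi x \<le> 1"
proof -
  interpret prob_space std_normal by (rule prob_space_std_normal)
  show "0 \<le> Phi x" "Phi x \<le> 1" unfolding Phi_def by auto
qed

lemma one_minus_Phi: "1 - Phi a = measure std_normal {a<..}"
proof -
  interpret prob_space std_normal by (rule prob_space_std_normal)
  have "measure std_normal (space std_normal - {..a}) = 1 - Phi a"
    unfolding Phi_def by (rule prob_compl) simp
  moreover have "space std_normal - {..a} = {a<..}" by auto
  ultimately show ?thesis by simp
qed

lemma measure_normal_density_atMost:
  assumes "0 < \<sigma>"
  shows "measure (density lborel (normal_density m \<sigma>)) {..x} = Phi ((x - m) / \<sigma>)"
proof -
  let ?N = "density lborel (normal_density m \<sigma>)"
  interpret N: prob_space ?N using assms by (rule prob_space_normal_density)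
  have "distributed ?N lborel (\<lambda>x. x) (normal_density m \<sigma>)"
    unfolding distributed_def by (auto simp: distr_id2)
  then have std: "distributed ?N lborel (\<lambda>x. (x - m) / \<sigma>) std_normal_density"
    using N.normal_standard_normal_convert[OF assms] by simp
  have "Phi ((x - m) / \<sigma>) = measure (distr ?N lborel (\<lambda>x. (x - m) / \<sigma>)) {..(x - m) / \<sigma>}"
    unfolding Phi_def using distributed_distr_eq_density[OF std] by simp
  also have "\<dots> = measure ?N ((\<lambda>x. (x - m) / \<sigma>) -` {..(x - m) / \<sigma>} \<inter> space ?N)"
    by (rule measure_distr) auto
  also have "(\<lambda>x. (x - m) / \<sigma>) -` {..(x - m) / \<sigma>} \<inter> space ?N = {..x}"
    using assms by (auto simp: divide_le_cancel)
  finally show ?thesis by simp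
qed

lemma std_normal_abs_ge_le:
  assumes "0 < a"
  shows "measure std_normal {x. a \<le> \<bar>x\<bar>} \<le> 3 / a ^ 4"
proof -
  interpret prob_space std_normal by (rule prob_space_std_normal)
  have "(fact (2 * 2) / (2 ^ 2 * fact 2) :: real) = 3"
    by (simp add: fact_numeral)
  then have moment: "has_bochner_integral lborel
      (\<lambda>x. std_normal_density x * x ^ (2 * 2) / a ^ 4) (3 / a ^ 4)"
    using has_bochner_integral_divide_zero[OF std_normal_moment_even[of 2], of "a ^ 4"] by simp
  have markov: "indicator {x. a \<le> \<bar>x\<bar>} x \<le> x ^ 4 / a ^ 4" for x :: real
  proof (cases "a \<le> \<bar>x\<bar>")
    case True
    then have "a ^ 4 \<le> \<bar>x\<bar> ^ 4" using assms by (intro power_mono) auto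
    then show ?thesis using True assms by (simp add: le_divide_eq power_even_abs_numeral)
  qed auto
  have "emeasure std_normal {x. a \<le> \<bar>x\<bar>}
      = (\<integral>\<^sup>+ x. std_normal_density x * indicator {x. a \<le> \<bar>x\<bar>} x \<partial>lborel)"
    by (subst emeasure_density) (auto intro!: nn_integral_cong simp: ennreal_mult' ennreal_indicator)
  also have "\<dots> \<le> (\<integral>\<^sup>+ x. ennreal (std_normal_density x * x ^ (2 * 2) / a ^ 4) \<partial>lborel)"
  proof (intro nn_integral_mono ennreal_leI)
    fix x
    show "std_normal_density x * indicator {x. a \<le> \<bar>x\<bar>} x \<le> std_normal_density x * x ^ (2 * 2) / a ^ 4"
      using mult_left_mono[OF markov[of x], of "std_normal_density x"] by simp
  qed
  also have "\<dots> = ennreal (3 / a ^ 4)"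
    using moment by (subst nn_integral_eq_integral)
      (auto simp: has_bochner_integral_iff intro!: divide_nonneg_nonneg)
  finally show ?thesis
    using assms by (simp add: emeasure_eq_measure)
qed

lemma Phi_two_sided_tail_le:
  assumes "0 < a" and "a \<le> b"
  shows "Phi (- b) + (1 - Phi a) \<le> 3 / a ^ 4"
proof -
  interpret prob_space std_normal by (rule prob_space_std_normal)
  have "Phi (- b) + (1 - Phi a) = measure std_normal ({..- b} \<union> {a<..})"
    unfolding one_minus_Phi unfolding Phi_def using assms
    by (subst finite_measure_Union) auto
  also have "\<dots> \<le> measure std_normal {x. a \<le> \<bar>x\<bar>}"
    using assms by (intro finite_measure_mono) auto
  also have "\<dots> \<le> 3 / a ^ 4"
    using assms(1) by (rule std_normal_abs_ge_le)
  finally show ?thesis .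
qed

definition C3_integrand :: "real \<Rightarrow> real \<Rightarrow> real" where
  "C3_integrand c t = Phi (- (2 + t) * sqrt c / sqrt (2 + 2 * t)) + 1 - Phi (t * sqrt c / sqrt (2 + 2 * t))"

lemma C3_eq_integral:
  "C3 \<alpha> = (\<integral>\<^sup>+ t. ennreal (C3_integrand (- (1/2) * ln \<alpha>) t) * indicator {0..} t \<partial>lborel)"
  unfolding C3_def C3_integrand_def Let_def ..

lemma C3_integrand_le_2: "C3_integrand c t \<le> 2"
  unfolding C3_integrand_def using Phi_le_1 Phi_nonneg by (smt (verit))

lemma C3_integrand_le_inverse_square:
  assumes c: "0 < c" and t: "1 \<le> t"
  shows "C3_integrand c t \<le> 48 / c\<^sup>2 * t powr -2"
proof -
  define a where "a = t * sqrt c / sqrt (2 + 2 * t)"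
  define b where "b = (2 + t) * sqrt c / sqrt (2 + 2 * t)"
  have a: "0 < a" using c t by (simp add: a_def)
  have "a \<le> b" unfolding a_def b_def using c t by (intro divide_right_mono mult_right_mono) auto
  have "C3_integrand c t = Phi (- b) + (1 - Phi a)"
    unfolding C3_integrand_def a_def b_def mult_minus_left divide_minus_left by simp
  also have "\<dots> \<le> 3 / a ^ 4"
    using a \<open>a \<le> b\<close> by (rule Phi_two_sided_tail_le)
  also have "\<dots> \<le> 3 / (t * c / 4)\<^sup>2"
  proof -
    have "t * c / 4 \<le> t\<^sup>2 * c / (2 + 2 * t)"
      using c t by (simp add: divide_simps power2_eq_square)
    also have "\<dots> = a\<^sup>2"
      using c t by (simp add: a_def power_divide power_mult_distrib)
    finally have "(t * c / 4)\<^sup>2 \<le> (a\<^sup>2)\<^sup>2" using c t by (intro power_mono) auto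
    then show ?thesis
      using c t by (intro divide_left_mono mult_pos_pos) (auto simp: power_mult[symmetric])
  qed
  also have "\<dots> = 48 / c\<^sup>2 * t powr -2"
    using c t by (simp add: powr_minus powr_numeral divide_simps power_mult_distrib)
  finally show ?thesis .
qed

lemma nn_integral_powr_minus_2_atLeast_1:
  "(\<integral>\<^sup>+ t. ennreal (t powr -2) * indicator {1..} t \<partial>lborel) = 1"
proof -
  have "((\<lambda>x::real. x powr -2) has_integral 1) {1..}"
    using has_integral_powr_to_inf[of "-2" 1] by simp
  then have "((\<lambda>x::real. if x \<in> {1..} then x powr -2 else 0) has_integral 1) UNIV"
    using has_integral_restrict_UNIV[of "{1..}" "\<lambda>x::real. x powr -2" 1] by simp
  then have "(\<integral>\<^sup>+ t. ennreal (if t \<in> {1..} then t powr -2 else 0) \<partial>lborel) = ennreal 1"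
    by (rule nn_integral_has_integral_lborel[rotated 2]) auto
  moreover have "ennreal (t powr -2) * indicator {1..} t = ennreal (if t \<in> {1..} then t powr -2 else 0)"
    for t :: real by (simp add: indicator_def)
  ultimately show ?thesis by simp
qed

lemma C3_finite:
  assumes "0 < \<alpha>" "\<alpha> < 1"
  shows "C3 \<alpha> < \<infinity>"
proof -
  define c where "c = - (1/2) * ln \<alpha>"
  have c: "0 < c" using assms by (simp add: c_def)
  have pointwise: "ennreal (C3_integrand c t) * indicator {0..} t
      \<le> 2 * indicator {0..1} t + ennreal (48 / c\<^sup>2) * (ennreal (t powr -2) * indicator {1..} t)" for t
  proof (cases "1 \<le> t")
    case True
    then show ?thesis
      using C3_integrand_le_inverse_square[OF c True]
      by (auto simp: ennreal_mult''[symmetric] intro!: add_increasing ennreal_leI)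
  next
    case False
    then show ?thesis
      using ennreal_leI[OF C3_integrand_le_2[of c t]] by (simp add: indicator_def)
  qed
  have "C3 \<alpha> \<le> (\<integral>\<^sup>+ t. 2 * indicator {0..1} t
      + ennreal (48 / c\<^sup>2) * (ennreal (t powr -2) * indicator {1..} t) \<partial>lborel)"
    unfolding C3_eq_integral c_def[symmetric] by (rule nn_integral_mono) (rule pointwise)
  also have "\<dots> = 2 + ennreal (48 / c\<^sup>2)"
    by (subst nn_integral_add)
      (auto simp: nn_integral_cmult nn_integral_cmult_indicator nn_integral_powr_minus_2_atLeast_1)
  finally show ?thesis
    by (simp add: top.not_eq_extremum order_le_less_trans)
qed

lemma sqrt_ratio_cross_ineqs:
  fixes r s u :: real
  assumes "0 < r" "0 < s" "1 \<le> u" "u * s \<le> r"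
  shows "(u\<^sup>2 + 1) * r * s \<le> (r\<^sup>2 + s\<^sup>2) * u"
    and "(u\<^sup>2 - 1) * r * s \<le> (r\<^sup>2 - s\<^sup>2) * u"
proof -
  have "s \<le> u * s" "r \<le> u * r" using assms by simp_all
  then have "0 \<le> (r - u * s) * (u * r - s)"
    using assms by (intro mult_nonneg_nonneg) linarith+
  then show "(u\<^sup>2 + 1) * r * s \<le> (r\<^sup>2 + s\<^sup>2) * u"
    by (simp add: algebra_simps power2_eq_square)
  have "0 \<le> (r - u * s) * (u * r + s)"
    using assms by (intro mult_nonneg_nonneg) auto
  then show "(u\<^sup>2 - 1) * r * s \<le> (r\<^sup>2 - s\<^sup>2) * u"
    by (simp add: algebra_simps power2_eq_square)
qed

lemma normal_2m_thresholds_le: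
  fixes c \<mu> t :: real
  assumes c: "0 < c" and m: "0 < \<mu>" and t: "0 \<le> t" and le: "(1 + t) * \<mu> \<le> c"
  shows "(- c - \<mu>) / sqrt (2 * \<mu>) \<le> - (2 + t) * sqrt c / sqrt (2 + 2 * t)"
    and "t * sqrt c / sqrt (2 + 2 * t) \<le> (c - \<mu>) / sqrt (2 * \<mu>)"
proof -
  define r where "r = sqrt c"
  define s where "s = sqrt \<mu>"
  define u where "u = sqrt (1 + t)"
  have r: "0 < r" "r\<^sup>2 = c" using c by (auto simp: r_def)
  have s: "0 < s" "s\<^sup>2 = \<mu>" using m by (auto simp: s_def)
  have u: "1 \<le> u" "u\<^sup>2 = 1 + t" using t by (auto simp: u_def)
  have sqrt_2\<mu>: "sqrt (2 * \<mu>) = sqrt 2 * s" by (simp add: s_def real_sqrt_mult)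
  have sqrt_2t: "sqrt (2 + 2 * t) = sqrt 2 * u"
    by (simp add: u_def real_sqrt_mult[symmetric] algebra_simps)
  have "sqrt ((1 + t) * \<mu>) \<le> sqrt c" using le by simp
  then have "u * s \<le> r" by (simp add: u_def s_def r_def real_sqrt_mult)
  note cross = sqrt_ratio_cross_ineqs[OF r(1) s(1) u(1) this]
  have "(- c - \<mu>) / sqrt (2 * \<mu>) = - (r\<^sup>2 + s\<^sup>2) / (sqrt 2 * s)"
    using r s sqrt_2\<mu> by simp
  also have "\<dots> \<le> - (u\<^sup>2 + 1) * r / (sqrt 2 * u)"
    using cross(1) u s by (simp add: divide_simps) (simp add: algebra_simps)
  also have "\<dots> = - (2 + t) * sqrt c / sqrt (2 + 2 * t)"
    using u sqrt_2t by (simp add: r_def)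
  finally show "(- c - \<mu>) / sqrt (2 * \<mu>) \<le> - (2 + t) * sqrt c / sqrt (2 + 2 * t)" .
  have "t * sqrt c / sqrt (2 + 2 * t) = (u\<^sup>2 - 1) * r / (sqrt 2 * u)"
    using u sqrt_2t by (simp add: r_def)
  also have "\<dots> \<le> (r\<^sup>2 - s\<^sup>2) / (sqrt 2 * s)"
    using cross(2) u s by (simp add: divide_simps)
  also have "\<dots> = (c - \<mu>) / sqrt (2 * \<mu>)"
    using r s sqrt_2\<mu> by simp
  finally show "t * sqrt c / sqrt (2 + 2 * t) \<le> (c - \<mu>) / sqrt (2 * \<mu>)" .
qed

lemma emeasure_normal_law_2m_abs_gt_le:
  fixes c \<mu> t :: real
  assumes c: "0 < c" and m: "0 \<le> \<mu>" and t: "0 \<le> t" and le: "(1 + t) * \<mu> \<le> c"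
  shows "emeasure (normal_law_2m \<mu>) {x. c < \<bar>x\<bar>} \<le> ennreal (C3_integrand c t)"
proof (cases "\<mu> = 0")
  case True
  then show ?thesis using c by (simp add: normal_law_2m_def emeasure_return)
next
  case False
  then have m': "0 < \<mu>" using m by simp
  define \<sigma> where "\<sigma> = sqrt (2 * \<mu>)"
  have \<sigma>: "0 < \<sigma>" using m' by (simp add: \<sigma>_def)
  let ?N = "density lborel (normal_density \<mu> \<sigma>)"
  interpret N: prob_space ?N using \<sigma> by (rule prob_space_normal_density)
  have law: "normal_law_2m \<mu> = ?N" using False by (simp add: normal_law_2m_def \<sigma>_def)
  have "measure ?N {x. c < \<bar>x\<bar>} \<le> measure ?N ({..-c} \<union> (space ?N - {..c}))"
    by (intro N.finite_measure_mono) auto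
  also have "\<dots> \<le> measure ?N {..-c} + (1 - measure ?N {..c})"
    by (subst N.prob_compl[symmetric]) (auto intro: measure_Un_le)
  also have "\<dots> = Phi ((- c - \<mu>) / \<sigma>) + (1 - Phi ((c - \<mu>) / \<sigma>))"
    by (simp add: measure_normal_density_atMost[OF \<sigma>])
  also have "\<dots> \<le> C3_integrand c t"
    using Phi_mono[OF normal_2m_thresholds_le(1)[OF c m' t le]]
      Phi_mono[OF normal_2m_thresholds_le(2)[OF c m' t le]]
    unfolding \<sigma>_def C3_integrand_def by simp
  finally show ?thesis
    unfolding law N.emeasure_eq_measure by (rule ennreal_leI)
qed

lemma one_plus_mult_le_of_scaled_le:
  fixes k c m n t :: real
  assumes "0 < k" "0 \<le> m" "m * (k + n) \<le> c * k" "t * k \<le> n"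
  shows "(1 + t) * m \<le> c"
proof -
  have "(1 + t) * m * k = m * (k + t * k)" by (simp add: algebra_simps)
  also have "\<dots> \<le> m * (k + n)"
    using assms(2,4) by (intro mult_left_mono) linarith+
  also have "\<dots> \<le> c * k" by (rule assms(3))
  finally show ?thesis using assms(1) by (rule mult_right_le_imp_le)
qed

lemma suminf_le_nn_integral_grid:
  fixes p :: "nat \<Rightarrow> ennreal" and f :: "real \<Rightarrow> ennreal" and k :: nat
  assumes k: "0 < k"
    and le: "\<And>i t. real i / k \<le> t \<Longrightarrow> t < real (Suc i) / k \<Longrightarrow> p i \<le> f t"
  shows "(\<Sum>i. p i) \<le> of_nat k * (\<integral>\<^sup>+ t. f t * indicator {0..} t \<partial>lborel)"
proof -
  define I where "I i = {real i / k ..< real (Suc i) / k}" for i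
  have disjoint: "disjoint_family I"
    unfolding disjoint_family_on_def
  proof (intro ballI impI)
    fix i j :: nat assume "i \<noteq> j"
    then have "Suc i \<le> j \<or> Suc j \<le> i" by auto
    then have "real (Suc i) / k \<le> real j / k \<or> real (Suc j) / k \<le> real i / k"
      by (elim disjE) (simp_all add: divide_right_mono)
    then show "I i \<inter> I j = {}" by (auto simp: I_def)
  qed
  have I_nonneg: "(\<Union>i. I i) \<subseteq> {0..}"
  proof
    fix t assume "t \<in> (\<Union>i. I i)"
    then obtain i where "real i / k \<le> t" by (auto simp: I_def)
    then show "t \<in> {0..}"
      using divide_nonneg_nonneg[of "real i" "real k"] by (simp del: divide_nonneg_nonneg)
  qed
  have "emeasure lborel (I i) = ennreal (1 / k)" for i
    using k by (simp add: I_def divide_right_mono diff_divide_distrib[symmetric])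
  then have "ennreal (1 / k) * (\<Sum>i. p i) = (\<Sum>i. \<integral>\<^sup>+ t. p i * indicator (I i) t \<partial>lborel)"
    by (simp add: I_def nn_integral_cmult_indicator mult.commute)
  also have "\<dots> = (\<integral>\<^sup>+ t. (\<Sum>i. p i * indicator (I i) t) \<partial>lborel)"
    by (subst nn_integral_suminf) (auto simp: I_def)
  also have "\<dots> \<le> (\<integral>\<^sup>+ t. (\<Sum>i. f t * indicator (I i) t) \<partial>lborel)"
  proof (intro nn_integral_mono suminf_le)
    show "p i * indicator (I i) t \<le> f t * indicator (I i) t" for i t
      using le[of i t] by (cases "t \<in> I i") (auto simp: I_def)
  qed auto
  also have "\<dots> = (\<integral>\<^sup>+ t. f t * indicator (\<Union>i. I i) t \<partial>lborel)"
    using suminf_indicator[OF disjoint] by simp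
  also have "\<dots> \<le> (\<integral>\<^sup>+ t. f t * indicator {0..} t \<partial>lborel)"
    using I_nonneg by (intro nn_integral_mono) (auto simp: indicator_def)
  finally have "of_nat k * (ennreal (1 / k) * (\<Sum>i. p i))
      \<le> of_nat k * (\<integral>\<^sup>+ t. f t * indicator {0..} t \<partial>lborel)"
    by (rule mult_left_mono) simp
  moreover have "of_nat k * ennreal (1 / k) = 1"
    using k by (simp add: ennreal_of_nat_eq_real_of_nat ennreal_mult''[symmetric])
  ultimately show ?thesis
    by (simp add: mult.assoc[symmetric])
qed

theorem lemma1:
  fixes M :: "'a measure" and z :: "nat \<Rightarrow> 'a \<Rightarrow> real" and \<mu> :: "nat \<Rightarrow> real"
    and \<alpha> :: real and k :: nat
  assumes "prob_space M"
    and "0 < \<alpha>" and "\<alpha> < 1" and "k \<ge> 1"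
    and "\<And>i. i \<ge> 1 \<Longrightarrow> z i \<in> borel_measurable M"
    and "\<And>i. i \<ge> 1 \<Longrightarrow> 0 \<le> \<mu> i"
    and "\<And>i. i \<ge> 1 \<Longrightarrow> \<mu> i \<le> - real k * ln \<alpha> / (2 * (real k + real i))"
    and "\<And>i. i \<ge> 1 \<Longrightarrow> distr M borel (z i) = normal_law_2m (\<mu> i)"
  shows "C3 \<alpha> < \<infinity> \<and>
    (\<integral>\<^sup>+ \<omega>. (\<Sum>i. indicator {\<omega>\<in>space M. \<bar>z (Suc i) \<omega>\<bar> > - (1/2) * ln \<alpha>} \<omega>) \<partial>M)
      \<le> C3 \<alpha> * of_nat k"
proof
  show "C3 \<alpha> < \<infinity>" using C3_finite assms(2,3) by blast
  define c where "c = - (1/2) * ln \<alpha>"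
  have c: "0 < c" using assms(2,3) by (simp add: c_def)
  have [measurable]: "z (Suc i) \<in> borel_measurable M" for i using assms(5) by simp
  have "emeasure M {\<omega>\<in>space M. c < \<bar>z (Suc i) \<omega>\<bar>} = emeasure (distr M borel (z (Suc i))) {x. c < \<bar>x\<bar>}"
    for i by (subst emeasure_distr) (auto intro!: arg_cong[where f="emeasure M"])
  then have "(\<integral>\<^sup>+ \<omega>. (\<Sum>i. indicator {\<omega>\<in>space M. c < \<bar>z (Suc i) \<omega>\<bar>} \<omega>) \<partial>M)
      = (\<Sum>i. emeasure (distr M borel (z (Suc i))) {x. c < \<bar>x\<bar>})"
    by (subst nn_integral_suminf) auto
  also have "\<dots> \<le> of_nat k * C3 \<alpha>"
    unfolding C3_eq_integral c_def[symmetric]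
  proof (rule suminf_le_nn_integral_grid)
    fix i t assume t: "real i / k \<le> t" "t < real (Suc i) / k"
    have "\<mu> (Suc i) * (real k + real (Suc i)) \<le> c * k"
      using assms(4) assms(7)[of "Suc i"] by (simp add: c_def field_simps)
    moreover have t0: "0 \<le> t" by (rule order_trans[OF _ t(1)]) simp
    moreover have "t * k \<le> real (Suc i)" using t(2) assms(4) by (simp add: field_simps)
    ultimately have "(1 + t) * \<mu> (Suc i) \<le> c"
      using assms(4) assms(6)[of "Suc i"] by (intro one_plus_mult_le_of_scaled_le[of k]) auto
    then show "emeasure (distr M borel (z (Suc i))) {x. c < \<bar>x\<bar>} \<le> ennreal (C3_integrand c t)"
      using emeasure_normal_law_2m_abs_gt_le[OF c assms(6)[of "Suc i"] t0] assms(8)[of "Suc i"] by simp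
  qed (use assms(4) in simp)
  finally show "(\<integral>\<^sup>+ \<omega>. (\<Sum>i. indicator {\<omega>\<in>space M. \<bar>z (Suc i) \<omega>\<bar> > - (1/2) * ln \<alpha>} \<omega>) \<partial>M)
      \<le> C3 \<alpha> * of_nat k"
    by (simp add: c_def mult.commute)
qed

end
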